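(* Let $p,q,r\in(0,1/36)$, $h=1/2$, $a=1/3$, and let $\mathcal S=\{S_1,\dots,S_6\}$ be the system on $\mathbb R$ given by $S_1(x)=px$, $S_2(x)=a+rx$, $S_3(x)=h-qx$, $S_4(x)=h-r+rx$, $S_5(x)=1-a-rx$, $S_6(x)=1-r+rx$. If $\log p/\log r$ is irrational, then $\mathcal S$ does not satisfy the Weak Separation Property (for every $q\in(0,1/36)$).
   Context: For a system $\{S_1,\dots,S_m\}$ of contracting similarities of $\mathbb R$, let $\mathcal F=\{S_{\mathbf i}^{-1}S_{\mathbf j}:\mathbf i,\mathbf j\in I^*\}$, where $I^*$ is the set of finite words over $\{1,\dots,m\}$ and $S_{j_1\dots j_k}=S_{j_1}\circ\dots\circ S_{j_k}$. The system satisfies the Weak Separation Property (WSP) if $\mathrm{Id}\notin\overline{\mathcal F\setminus\{\mathrm{Id}\}}$, the closure taken in the space of affine maps $x\mapsto \lambda x+c$ of $\mathbb R$ with the topology of convergence of the coefficients $(\lambda,c)$. *)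

theory Defs
  imports "HOL-Analysis.Analysis"
begin

text \<open>An affine map x \<mapsto> lambda*x + c of the real line is represented by its
coefficient pair (lambda, c) :: real \<times> real; the product topology on pairs is the
topology of convergence of the coefficients.\<close>

type_synonym aff = "real \<times> real"

definition aff_apply :: "aff \<Rightarrow> real \<Rightarrow> real" where
  "aff_apply f x = fst f * x + snd f"

definition aff_comp :: "aff \<Rightarrow> aff \<Rightarrow> aff" where
  "aff_comp f g = (fst f * fst g, fst f * snd g + snd f)"

definition aff_inv :: "aff \<Rightarrow> aff" where
  "aff_inv f = (1 / fst f, - snd f / fst f)"

definition aff_id :: aff where
  "aff_id = (1, 0)"

definition word_map :: "(nat \<Rightarrow> aff) \<Rightarrow> nat list \<Rightarrow> aff" where
  "word_map S w = foldr (\<lambda>i acc. aff_comp (S i) acc) w aff_id"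

definition words :: "nat \<Rightarrow> nat list set" where
  "words m = {w. set w \<subseteq> {1..m}}"

definition F_set :: "(nat \<Rightarrow> aff) \<Rightarrow> nat \<Rightarrow> aff set" where
  "F_set S m = {aff_comp (aff_inv (word_map S i)) (word_map S j) | i j.
                  i \<in> words m \<and> j \<in> words m}"

definition WSP :: "(nat \<Rightarrow> aff) \<Rightarrow> nat \<Rightarrow> bool" where
  "WSP S m \<longleftrightarrow> aff_id \<notin> closure (F_set S m - {aff_id})"

definition ex_sys :: "real \<Rightarrow> real \<Rightarrow> real \<Rightarrow> nat \<Rightarrow> aff" where
  "ex_sys p q r i =
     (let h = 1/2; a = 1/3 in
      if i = 1 then (p, 0)
      else if i = 2 then (r, a)
      else if i = 3 then (-q, h)
      else if i = 4 then (r, h - r)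
      else if i = 5 then (-r, 1 - a)
      else (r, 1 - r))"

end

theory Submission
  imports Defs "HOL-Analysis.Kronecker_Approximation_Theorem"
begin

(* The words S_3 S_1^N S_2 and S_4 S_6^M S_5 both send the point -1/(3r) to 1/2, so
   the quotient of their maps in F is the similarity fixing -1/(3r) with ratio
   t = r^(M+1) / (q p^N).  Since ln p / ln r is irrational, Kronecker's theorem makes
   (M + 1) - N ln p / ln r approach ln q / ln r from above, i.e. t approaches 1 from below;
   the corresponding maps differ from the identity and converge to it. *)

lemma nat_minus_multiple_dense:
  fixes \<theta> x y :: real
  assumes "\<theta> \<notin> \<rat>" "\<theta> > 0" "0 \<le> x" "x < y"
  obtains M N :: nat where "x < real M - real N * \<theta>" "real M - real N * \<theta> < y"
proof -
  have "(y - x) / 2 > 0" using assms(4) by simp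
  from sequence_of_fractional_parts_is_dense[OF assms(1) this, of "- (x + y) / 2"]
  obtain h k :: int where "0 < k" "\<bar>k * \<theta> - h - (- (x + y) / 2)\<bar> < (y - x) / 2" .
  then have between: "x < h - k * \<theta>" "h - k * \<theta> < y"
    unfolding abs_less_iff by (auto simp: field_simps)
  have "0 < k * \<theta>"
    using \<open>0 < k\<close> assms(2) by simp
  then have "0 < h"
    using between(1) assms(3) by linarith
  show ?thesis
    using that[of "nat h" "nat k"] between \<open>0 < h\<close> \<open>0 < k\<close> by simp
qed

lemma power_quotients_dense:
  fixes p r a b :: real
  assumes "0 < p" "p < 1" "0 < r" "r < 1" "ln p / ln r \<notin> \<rat>"
    and "0 < a" "a < b" "b \<le> 1"
  obtains M N :: nat where "a < r ^ M / p ^ N" "r ^ M / p ^ N < b"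
proof -
  have "ln r < 0" "ln p < 0" using assms(1-4) by simp_all
  moreover have "ln a < ln b" "ln b \<le> 0"
    using assms(6-8) by simp_all
  ultimately have "ln p / ln r > 0" "ln b / ln r \<ge> 0" "ln b / ln r < ln a / ln r"
    by (simp_all add: divide_neg_neg divide_nonpos_neg divide_less_cancel)
  then obtain M N :: nat where
    MN: "ln b / ln r < M - N * (ln p / ln r)" "M - N * (ln p / ln r) < ln a / ln r"
    using nat_minus_multiple_dense assms(5) by metis
  have log: "ln (r ^ M / p ^ N) = ln r * (M - N * (ln p / ln r))"
    using assms(1,3) \<open>ln r < 0\<close> by (simp add: ln_div ln_realpow algebra_simps)
  have "ln a < ln (r ^ M / p ^ N)" "ln (r ^ M / p ^ N) < ln b"
    using mult_strict_left_mono_neg[OF MN(2) \<open>ln r < 0\<close>]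
      mult_strict_left_mono_neg[OF MN(1) \<open>ln r < 0\<close>] \<open>ln r < 0\<close>
    unfolding log by simp_all
  then show ?thesis
    using that assms(1,3,6,7) by simp
qed

lemma one_in_closure_power_quotients_below:
  fixes p q r :: real
  assumes "0 < p" "p < 1" "0 < q" "q < 1" "0 < r" "r < 1" "ln p / ln r \<notin> \<rat>"
  shows "1 \<in> closure {t. t < 1 \<and> (\<exists>M N. t = r ^ Suc M / (q * p ^ N))}"
  unfolding closure_approachable
proof (intro allI impI)
  fix e :: real
  assume "0 < e"
  define c where "c = max (1/2) (1 - e)"
  have c: "0 < c" "c < 1" "1 - e \<le> c"
    using \<open>0 < e\<close> by (auto simp: c_def)
  obtain M N where MN: "q * c < r ^ M / p ^ N" "r ^ M / p ^ N < q"
    using power_quotients_dense[OF assms(1,2,5,6,7), of "q * c" q] assms(3,4) c by auto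
  have "M \<noteq> 0"
  proof
    assume "M = 0"
    then have "1 \<le> r ^ M / p ^ N"
      using assms(1,2) by (simp add: power_le_one)
    with MN(2) assms(4) show False by simp
  qed
  then obtain M' where "M = Suc M'"
    using not0_implies_Suc by blast
  define t where "t = r ^ Suc M' / (q * p ^ N)"
  have "t = r ^ M / p ^ N / q"
    using \<open>M = Suc M'\<close> by (simp add: t_def)
  then have "c < t" "t < 1"
    using MN assms(3) by (simp_all only: pos_less_divide_eq pos_divide_less_eq) (simp_all add: ac_simps)
  then show "\<exists>t \<in> {t. t < 1 \<and> (\<exists>M N. t = r ^ Suc M / (q * p ^ N))}. dist t 1 < e"
    using c(3) by (intro bexI[of _ t]) (auto simp: t_def dist_real_def)
qed

lemma word_map_Cons: "word_map S (i # w) = aff_comp (S i) (word_map S w)"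
  by (simp add: word_map_def)

lemma word_map_replicate_append:
  assumes "S i = (a, (1 - a) * z)"
  shows "word_map S (replicate n i @ w) =
           (a ^ n * fst (word_map S w), z + a ^ n * (snd (word_map S w) - z))"
  by (induction n) (simp_all add: word_map_Cons aff_comp_def assms algebra_simps)

lemma ex_sys_F_set_mem:
  fixes p q r :: real and M N :: nat
  assumes "p \<noteq> 0" "q \<noteq> 0" "r \<noteq> 0"
  defines "t \<equiv> r ^ Suc M / (q * p ^ N)"
  shows "(t, (t - 1) / (3 * r)) \<in> F_set (ex_sys p q r) 6"
proof -
  let ?S = "ex_sys p q r"
  let ?i = "3 # replicate N 1 @ [2]"
  let ?j = "4 # replicate M 6 @ [5]"
  have S1: "?S 1 = (p, (1 - p) * 0)" and S6: "?S 6 = (r, (1 - r) * 1)"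
    by (simp_all add: ex_sys_def)
  have "word_map ?S ?i = (- q * p ^ N * r, 1/2 - q * p ^ N / 3)"
    by (simp only: word_map_Cons word_map_replicate_append[of ?S, OF S1])
       (simp add: word_map_def aff_comp_def aff_id_def ex_sys_def)
  moreover have "word_map ?S ?j = (- (r ^ Suc (Suc M)), 1/2 - r ^ Suc M / 3)"
    by (simp only: word_map_Cons word_map_replicate_append[of ?S, OF S6])
       (simp add: word_map_def aff_comp_def aff_id_def ex_sys_def algebra_simps)
  ultimately have "aff_comp (aff_inv (word_map ?S ?i)) (word_map ?S ?j) = (t, (t - 1) / (3 * r))"
    using assms(1-3) by (simp add: aff_comp_def aff_inv_def t_def field_simps)
  moreover have "?i \<in> words 6" "?j \<in> words 6"
    by (auto simp: words_def)
  ultimately show ?thesis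
    unfolding F_set_def mem_Collect_eq by (intro exI[of _ ?i] exI[of _ ?j]) auto
qed

theorem mainTheorem13:
  fixes p q r :: real
  assumes "0 < p" "p < 1/36" and "0 < q" "q < 1/36" and "0 < r" "r < 1/36"
    and "ln p / ln r \<notin> \<rat>"
  shows "\<not> WSP (ex_sys p q r) 6"
proof -
  define T where "T = {t. t < 1 \<and> (\<exists>M N. t = r ^ Suc M / (q * p ^ N))}"
  define g where "g t = (t, (t - 1) / (3 * r))" for t :: real
  have "1 \<in> closure T"
    unfolding T_def using assms by (intro one_in_closure_power_quotients_below) auto
  moreover have "continuous_on UNIV g"
    unfolding g_def using assms(5) by (intro continuous_intros) simp
  ultimately have "g 1 \<in> closure (g ` T)"
    using continuous_image_closure_subset[of UNIV g T] by blast
  moreover have "g ` T \<subseteq> F_set (ex_sys p q r) 6 - {aff_id}"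
    using ex_sys_F_set_mem assms(1,3,5) by (auto simp: T_def g_def aff_id_def)
  ultimately have "g 1 \<in> closure (F_set (ex_sys p q r) 6 - {aff_id})"
    using closure_mono by blast
  moreover have "g 1 = aff_id"
    by (simp add: g_def aff_id_def)
  ultimately show ?thesis
    unfolding WSP_def by simp
qed
end
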